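(* Let $H$ be a punctured torus, $(\alpha,\beta)$ a free basis of $\pi_1H$, $\rho:\pi_1H\to\mathrm{PSL}_2\mathbb{R}$ a representation, and $g=\rho(\alpha)$, $h=\rho(\beta)$. Then $\rho$ is virtually abelian but not abelian if and only if two of $\{g,h,gh\}$ are half-turns (elliptic elements of order $2$) about distinct points $q_1,q_2\in\mathbb{H}^2$ and the third is a non-trivial hyperbolic translation along the unique geodesic through $q_1$ and $q_2$.
   Context: A representation is virtually abelian if its image contains an abelian subgroup of finite index. *)

theory Defs
  imports "HOL-Analysis.Analysis" "HOL-Algebra.Coset" "HOL-Algebra.Generated_Groups"
begin

definition SL2R :: "(real^2^2) monoid" where
  "SL2R = \<lparr> carrier = {A. det A = 1}, mult = (\<lambda>A B. A ** B), one = mat 1 \<rparr>"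

definition PSL2R :: "(real^2^2) set monoid" where
  "PSL2R = SL2R Mod {mat 1, - mat 1}"

text \<open>Moebius action of a matrix on the complex plane (upper half-plane model of H^2).\<close>
definition mob :: "real^2^2 \<Rightarrow> complex \<Rightarrow> complex" where
  "mob A z = (of_real (A$1$1) * z + of_real (A$1$2)) / (of_real (A$2$1) * z + of_real (A$2$2))"

text \<open>Representative-based action and absolute trace of an element of PSL(2,R)
  (both independent of the chosen representative).\<close>
definition rep :: "(real^2^2) set \<Rightarrow> real^2^2" where
  "rep X = (SOME A. A \<in> X)"

definition pmob :: "(real^2^2) set \<Rightarrow> complex \<Rightarrow> complex" where
  "pmob X z = mob (rep X) z"

definition ptr :: "(real^2^2) set \<Rightarrow> real" where
  "ptr X = \<bar>rep X $1$1 + rep X $2$2\<bar>"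

definition H2 :: "complex set" where
  "H2 = {z. Im z > 0}"

definition elliptic :: "(real^2^2) set \<Rightarrow> bool" where
  "elliptic X \<longleftrightarrow> X \<in> carrier PSL2R \<and> ptr X < 2"

definition hyperbolic :: "(real^2^2) set \<Rightarrow> bool" where
  "hyperbolic X \<longleftrightarrow> X \<in> carrier PSL2R \<and> ptr X > 2"

definition half_turn :: "(real^2^2) set \<Rightarrow> complex \<Rightarrow> bool" where
  "half_turn X q \<longleftrightarrow> elliptic X \<and> X \<noteq> \<one>\<^bsub>PSL2R\<^esub> \<and> X \<otimes>\<^bsub>PSL2R\<^esub> X = \<one>\<^bsub>PSL2R\<^esub>
     \<and> q \<in> H2 \<and> pmob X q = q"

definition geodesic :: "complex set \<Rightarrow> bool" where
  "geodesic L \<longleftrightarrow> (\<exists>c::real. L = {z\<in>H2. Re z = c})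
               \<or> (\<exists>(c::real) (r::real). r > 0 \<and> L = {z\<in>H2. cmod (z - of_real c) = r})"

definition geodesic_through :: "complex \<Rightarrow> complex \<Rightarrow> complex set" where
  "geodesic_through q1 q2 = (THE L. geodesic L \<and> q1 \<in> L \<and> q2 \<in> L)"

definition hyp_translation_along :: "(real^2^2) set \<Rightarrow> complex set \<Rightarrow> bool" where
  "hyp_translation_along X L \<longleftrightarrow> hyperbolic X \<and> X \<noteq> \<one>\<^bsub>PSL2R\<^esub> \<and> pmob X ` L = L"

definition abelian_set :: "('a, 'b) monoid_scheme \<Rightarrow> 'a set \<Rightarrow> bool" where
  "abelian_set G S \<longleftrightarrow> (\<forall>x\<in>S. \<forall>y\<in>S. x \<otimes>\<^bsub>G\<^esub> y = y \<otimes>\<^bsub>G\<^esub> x)"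

definition virtually_abelian :: "('a, 'b) monoid_scheme \<Rightarrow> 'a set \<Rightarrow> bool" where
  "virtually_abelian G S \<longleftrightarrow> (\<exists>K. subgroup K G \<and> K \<subseteq> S \<and> abelian_set G K
       \<and> finite (rcosets\<^bsub>G\<lparr>carrier := S\<rparr>\<^esub> K))"

definition two_halfturns_one_translation ::
  "(real^2^2) set \<Rightarrow> (real^2^2) set \<Rightarrow> (real^2^2) set \<Rightarrow> bool" where
  "two_halfturns_one_translation x y z \<longleftrightarrow>
     (\<exists>q1 q2. q1 \<noteq> q2 \<and> half_turn x q1 \<and> half_turn y q2
        \<and> hyp_translation_along z (geodesic_through q1 q2))"

end

theory Submission
  imports Defs
begin

(* Any two non-torsion elements of a virtually abelian subgroup of PSL(2,R) commute: suitable powers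
   of them commute, and the commutant of a non-central element of SL(2,R) is abelian. So if <g,h> is
   virtually abelian but not abelian, two of g, h, gh are non-commuting torsion, hence elliptic,
   elements a, b. Their commutator is hyperbolic; conjugating it by a (or b) gives an element of the
   same trace commuting with it, i.e. the commutator or its inverse, and this forces tr a = tr b = 0.
   Thus a and b are half-turns, and ab, whose square is the commutator, is a hyperbolic translation
   along the geodesic through their centres. Conversely two half-turns generate a dihedral group, in
   which the cyclic group generated by their product has index at most two; it is not abelian, since
   that product is not an involution. *)

definition mat2 :: "real \<Rightarrow> real \<Rightarrow> real \<Rightarrow> real \<Rightarrow> real^2^2" where
  "mat2 a b c d = (\<chi> i j. if i = 1 then (if j = 1 then a else b) else (if j = 1 then c else d))"

lemma mat2_nth [simp]:
  "mat2 a b c d $1$1 = a" "mat2 a b c d $1$2 = b" "mat2 a b c d $2$1 = c" "mat2 a b c d $2$2 = d"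
  by (simp_all add: mat2_def)

lemma mat2_cases: obtains a b c d where "A = mat2 a b c d"
proof
  show "A = mat2 (A$1$1) (A$1$2) (A$2$1) (A$2$2)" by (simp add: vec_eq_iff forall_2)
qed

lemma mat2_eq_iff: "mat2 a b c d = mat2 a' b' c' d' \<longleftrightarrow> a = a' \<and> b = b' \<and> c = c' \<and> d = d'"
  by (simp add: vec_eq_iff forall_2)

lemma mat2_mult:
  "mat2 a b c d ** mat2 a' b' c' d' = mat2 (a*a'+b*c') (a*b'+b*d') (c*a'+d*c') (c*b'+d*d')"
  by (simp add: vec_eq_iff forall_2 matrix_matrix_mult_def sum_2)

lemma det_mat2: "det (mat2 a b c d) = a*d - b*c"
  by (simp add: det_2)

lemma trace_mat2: "trace (mat2 a b c d) = a + d"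
  by (simp add: trace_def sum_2)

lemma mat_1_eq_mat2: "mat 1 = mat2 1 0 0 1"
  by (simp add: vec_eq_iff forall_2 mat_def)

lemma uminus_mat2: "- mat2 a b c d = mat2 (-a) (-b) (-c) (-d)"
  by (simp add: vec_eq_iff forall_2)

lemma mob_mat2: "mob (mat2 a b c d) z = (of_real a * z + of_real b) / (of_real c * z + of_real d)"
  by (simp add: mob_def)

lemma matrix_mul_uminus_left: "(- A) ** B = - (A ** (B::real^2^2))"
  by (simp add: vec_eq_iff matrix_matrix_mult_def sum_negf)

lemma matrix_mul_uminus_right: "A ** (- B) = - (A ** (B::real^2^2))"
  by (simp add: vec_eq_iff matrix_matrix_mult_def sum_negf)

lemma det_uminus2: "det (- (A::real^2^2)) = det A"
  by (simp add: det_2)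

lemma trace_uminus: "trace (- (A::real^2^2)) = - trace A"
  by (simp add: trace_def sum_negf)

definition adj2 :: "real^2^2 \<Rightarrow> real^2^2" where
  "adj2 A = mat2 (A$2$2) (-A$1$2) (-A$2$1) (A$1$1)"

lemma adj2_mat2: "adj2 (mat2 a b c d) = mat2 d (-b) (-c) a"
  by (simp add: adj2_def)

lemma det_adj2: "det (adj2 A) = det A"
  by (simp add: adj2_def det_mat2 det_2 algebra_simps)

lemma adj2_mult_self:
  assumes "det A = 1" shows "adj2 A ** A = mat 1" and "A ** adj2 A = mat 1"
proof -
  obtain a b c d where A: "A = mat2 a b c d" by (rule mat2_cases)
  show "adj2 A ** A = mat 1" "A ** adj2 A = mat 1"
    using assms by (simp_all add: A adj2_mat2 mat2_mult mat_1_eq_mat2 det_mat2 mat2_eq_iff algebra_simps)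
qed

lemma trace_conj_adj2: "det A = 1 \<Longrightarrow> trace (A ** X ** adj2 A) = trace X"
  by (metis adj2_mult_self(1) matrix_mul_assoc matrix_mul_lid trace_mul_sym)

lemma SL2_cayley_hamilton:
  "det (A::real^2^2) = 1 \<Longrightarrow> A ** A = trace A *\<^sub>R A - mat 1"
proof -
  obtain a b c d where A: "A = mat2 a b c d" by (rule mat2_cases)
  assume "det A = 1"
  then show ?thesis unfolding A
    by (simp add: vec_eq_iff scaleR_vec_def forall_2 mat2_mult trace_mat2 det_mat2 mat_def algebra_simps)
qed

lemma trace_mult_self: "det (A::real^2^2) = 1 \<Longrightarrow> trace (A ** A) = (trace A)\<^sup>2 - 2"
proof -
  obtain a b c d where A: "A = mat2 a b c d" by (rule mat2_cases)
  assume "det A = 1"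
  then show ?thesis unfolding A by (simp add: mat2_mult trace_mat2 det_mat2 power2_eq_square algebra_simps)
qed

lemma SL2R_simps [simp]:
  "carrier SL2R = {A. det A = 1}" "mult SL2R = (\<lambda>A B. A ** B)" "one SL2R = mat 1"
  by (simp_all add: SL2R_def)

lemma group_SL2R: "group SL2R"
proof (rule groupI)
  fix x assume "x \<in> carrier SL2R"
  then show "\<exists>y\<in>carrier SL2R. y \<otimes>\<^bsub>SL2R\<^esub> x = \<one>\<^bsub>SL2R\<^esub>"
    by (intro bexI[of _ "adj2 x"]) (simp_all add: adj2_mult_self det_adj2)
qed (simp_all add: det_mul matrix_mul_assoc)

interpretation SL: group SL2R by (rule group_SL2R)

lemma SL2R_inv: "det A = 1 \<Longrightarrow> inv\<^bsub>SL2R\<^esub> A = adj2 A"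
  by (rule SL.inv_equality) (simp_all add: adj2_mult_self det_adj2)

definition psl :: "real^2^2 \<Rightarrow> (real^2^2) set" where
  "psl A = {A, - A}"

lemma psl_eq_iff: "psl A = psl B \<longleftrightarrow> B = A \<or> B = - A"
  by (auto simp: psl_def)

definition plus_minus_I :: "(real^2^2) set" where
  "plus_minus_I = {mat 1, - mat 1}"

lemma plus_minus_I_subgroup: "subgroup plus_minus_I SL2R"
proof (rule SL.subgroupI)
  fix a assume "a \<in> plus_minus_I"
  then have "inv\<^bsub>SL2R\<^esub> a = a"
    by (intro SL.inv_equality)
      (auto simp: plus_minus_I_def det_uminus2 matrix_mul_uminus_left matrix_mul_uminus_right)
  then show "inv\<^bsub>SL2R\<^esub> a \<in> plus_minus_I" using \<open>a \<in> plus_minus_I\<close> by simp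
qed (auto simp: plus_minus_I_def det_uminus2 matrix_mul_uminus_left matrix_mul_uminus_right)

lemma rcos_plus_minus_I: "plus_minus_I #>\<^bsub>SL2R\<^esub> A = psl A"
  by (auto simp: plus_minus_I_def psl_def r_coset_def matrix_mul_uminus_left)

lemma plus_minus_I_normal: "plus_minus_I \<lhd> SL2R"
proof (rule SL.normalI[OF plus_minus_I_subgroup], intro ballI)
  fix A show "plus_minus_I #>\<^bsub>SL2R\<^esub> A = A <#\<^bsub>SL2R\<^esub> plus_minus_I"
    unfolding rcos_plus_minus_I by (auto simp: plus_minus_I_def psl_def l_coset_def matrix_mul_uminus_right)
qed

interpretation PM: normal "plus_minus_I" SL2R by (rule plus_minus_I_normal)

lemma group_PSL2R: "group PSL2R"
  unfolding PSL2R_def plus_minus_I_def[symmetric] by (rule PM.factorgroup_is_group)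

interpretation P: group PSL2R by (rule group_PSL2R)

lemma carrier_PSL2R: "carrier PSL2R = psl ` {A. det A = 1}"
  unfolding PSL2R_def plus_minus_I_def[symmetric] carrier_FactGroup by (simp add: rcos_plus_minus_I)

lemma PSL2R_obtain:
  assumes "x \<in> carrier PSL2R" obtains A where "det A = 1" "x = psl A"
  using assms unfolding carrier_PSL2R by auto

lemma psl_hom: "psl \<in> hom SL2R PSL2R"
  using PM.r_coset_hom_Mod unfolding PSL2R_def plus_minus_I_def[symmetric] rcos_plus_minus_I[symmetric]
  by simp

interpretation psl: group_hom SL2R PSL2R psl
  by (simp add: group_hom_def group_hom_axioms_def psl_hom group_SL2R group_PSL2R)

lemma psl_in_carrier: "det A = 1 \<Longrightarrow> psl A \<in> carrier PSL2R"
  by (simp add: carrier_PSL2R)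

lemma psl_mult: "det A = 1 \<Longrightarrow> det B = 1 \<Longrightarrow> psl A \<otimes>\<^bsub>PSL2R\<^esub> psl B = psl (A ** B)"
  using psl.hom_mult[of A B] by simp

lemma PSL2R_one: "\<one>\<^bsub>PSL2R\<^esub> = psl (mat 1)"
  by (simp add: PSL2R_def psl_def)

lemma psl_pow: "det A = 1 \<Longrightarrow> psl A [^]\<^bsub>PSL2R\<^esub> (n::nat) = psl (A [^]\<^bsub>SL2R\<^esub> n)"
  using psl.hom_nat_pow[of A n] by simp

lemma psl_inv: "det A = 1 \<Longrightarrow> inv\<^bsub>PSL2R\<^esub> (psl A) = psl (adj2 A)"
  using psl.hom_inv[of A] by (simp add: SL2R_inv)

lemma rep_psl: "rep (psl A) = A \<or> rep (psl A) = - A"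
proof -
  have "rep (psl A) \<in> psl A" unfolding rep_def by (rule someI[of _ A]) (simp add: psl_def)
  then show ?thesis by (simp add: psl_def)
qed

lemma ptr_psl: "ptr (psl A) = \<bar>trace A\<bar>"
proof -
  have "\<bar>- A$1$1 + - A$2$2\<bar> = \<bar>A$1$1 + A$2$2\<bar>" by linarith
  then show ?thesis using rep_psl[of A] unfolding ptr_def trace_def sum_2 by auto
qed

lemma mob_uminus: "mob (- A) z = mob A z"
proof -
  have "mob (- A) z = - (of_real (A$1$1) * z + of_real (A$1$2)) / - (of_real (A$2$1) * z + of_real (A$2$2))"
    unfolding mob_def by simp
  then show ?thesis unfolding mob_def by (simp only: minus_divide_divide)
qed

lemma pmob_psl: "pmob (psl A) z = mob A z"
  using rep_psl[of A] unfolding pmob_def by (auto simp: mob_uminus)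

section \<open>Commutants, torsion and traces\<close>

definition nonscalar :: "real^2^2 \<Rightarrow> bool" where
  "nonscalar P \<longleftrightarrow> P$1$2 \<noteq> 0 \<or> P$2$1 \<noteq> 0 \<or> P$1$1 \<noteq> P$2$2"

lemma nonscalar_iff_psl_ne_one: "det P = 1 \<Longrightarrow> nonscalar P \<longleftrightarrow> psl P \<noteq> \<one>\<^bsub>PSL2R\<^esub>"
proof -
  assume "det P = 1"
  moreover obtain p q r u where P: "P = mat2 p q r u" by (rule mat2_cases)
  ultimately have pu: "p * u - q * r = 1" by (simp add: det_mat2)
  have one: "psl P = \<one>\<^bsub>PSL2R\<^esub> \<longleftrightarrow> q = 0 \<and> r = 0 \<and> p = u \<and> (p = 1 \<or> p = -1)"
    unfolding PSL2R_one psl_eq_iff P mat_1_eq_mat2 uminus_mat2 mat2_eq_iff by auto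
  have "q = 0 \<Longrightarrow> r = 0 \<Longrightarrow> p = u \<Longrightarrow> p = 1 \<or> p = -1"
    using pu by (metis diff_zero mult_cancel_left1 mult_minus1 mult_zero_left square_eq_iff)
  then show ?thesis unfolding one by (auto simp: nonscalar_def P)
qed

lemma nonscalar_if_abs_trace_ne_2: "det X = 1 \<Longrightarrow> \<bar>trace X\<bar> \<noteq> 2 \<Longrightarrow> nonscalar X"
  unfolding nonscalar_iff_psl_ne_one PSL2R_one psl_eq_iff
  by (auto simp: equation_minus_iff trace_uminus trace_I)

lemma commute_nonscalar_imp_pencil:
  assumes "nonscalar P" "X ** P = P ** X"
  shows "\<exists>\<alpha> \<beta>. X = \<alpha> *\<^sub>R mat 1 + \<beta> *\<^sub>R P"
proof -
  obtain p q r u where P: "P = mat2 p q r u" by (rule mat2_cases)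
  obtain x y z w where X: "X = mat2 x y z w" by (rule mat2_cases)
  have "x*p + y*r = p*x + q*z" "x*q + y*u = p*y + q*w" "z*p + w*r = r*x + u*z"
    using assms(2) unfolding P X mat2_mult mat2_eq_iff by auto
  then have E: "y*r = q*z" "q*(x - w) = y*(p - u)" "z*(p - u) = r*(x - w)"
    by (simp_all add: algebra_simps)
  have "\<exists>\<beta>. y = \<beta>*q \<and> z = \<beta>*r \<and> x - w = \<beta>*(p - u)"
  proof -
    consider "q \<noteq> 0" | "r \<noteq> 0" | "p \<noteq> u" using assms(1) by (auto simp: nonscalar_def P)
    then show ?thesis
    proof cases
      case 1 then show ?thesis using E by (intro exI[of _ "y/q"]) (auto simp: field_simps)
    next
      case 2 then show ?thesis using E by (intro exI[of _ "z/r"]) (auto simp: field_simps)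
    next
      case 3 then show ?thesis using E by (intro exI[of _ "(x - w)/(p - u)"]) (auto simp: field_simps)
    qed
  qed
  then obtain \<beta> where "y = \<beta>*q" "z = \<beta>*r" "x - w = \<beta>*(p - u)" by blast
  then show ?thesis
    by (intro exI[of _ "x - \<beta>*p"] exI[of _ \<beta>])
      (simp add: P X vec_eq_iff forall_2 mat_def algebra_simps)
qed

lemma commute_nonscalar_trans:
  assumes "nonscalar P" "X ** P = P ** X" "Z ** P = P ** Z"
  shows "X ** Z = Z ** X"
proof -
  obtain \<alpha> \<beta> \<alpha>' \<beta>' where "X = \<alpha> *\<^sub>R mat 1 + \<beta> *\<^sub>R P" "Z = \<alpha>' *\<^sub>R mat 1 + \<beta>' *\<^sub>R P"
    using commute_nonscalar_imp_pencil assms by metis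
  then show ?thesis
    by (simp add: vec_eq_iff forall_2 matrix_matrix_mult_def sum_2 mat_def algebra_simps)
qed

lemma trace_zero_if_anticommute:
  fixes A B :: "real^2^2"
  assumes "det A = 1" "A ** B = - (B ** A)"
  shows "trace B = 0"
proof -
  have "trace B = trace (A ** B ** adj2 A)" using trace_conj_adj2[OF assms(1)] by simp
  also have "\<dots> = - trace B"
    using assms by (simp add: matrix_mul_uminus_left matrix_mul_assoc[symmetric] adj2_mult_self trace_uminus)
  finally show ?thesis by simp
qed

lemma SL2_not_anticommute:
  fixes A B :: "real^2^2"
  assumes dA: "det A = 1" and dB: "det B = 1"
  shows "A ** B \<noteq> - (B ** A)"
proof
  assume AB: "A ** B = - (B ** A)"
  then have "B ** A = - (A ** B)" by simp
  then have "trace A = 0" "trace B = 0"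
    using trace_zero_if_anticommute dA dB AB by blast+
  moreover obtain a b c d where A: "A = mat2 a b c d" by (rule mat2_cases)
  moreover obtain e f g h where B: "B = mat2 e f g h" by (rule mat2_cases)
  ultimately have "d = -a" "h = -e" by (simp_all add: trace_mat2)
  then have bc: "b*c = -(1 + a\<^sup>2)" and fg: "f*g = -(1 + e\<^sup>2)" and E: "b*g + f*c = -(2*a*e)"
    using dA dB AB by (auto simp: A B det_mat2 mat2_mult uminus_mat2 mat2_eq_iff power2_eq_square)
  have "4*a\<^sup>2*e\<^sup>2 < 4*(b*c)*(f*g)"
    unfolding bc fg by (simp add: algebra_simps add_pos_nonneg)
  also have "\<dots> \<le> (b*g + f*c)\<^sup>2"
    using zero_le_power2[of "b*g - f*c"] by (simp add: power2_eq_square algebra_simps)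
  also have "\<dots> = 4*a\<^sup>2*e\<^sup>2" unfolding E by (simp add: power2_eq_square)
  finally show False by simp
qed

lemma psl_commute_iff:
  assumes "det A = 1" "det B = 1"
  shows "psl A \<otimes>\<^bsub>PSL2R\<^esub> psl B = psl B \<otimes>\<^bsub>PSL2R\<^esub> psl A \<longleftrightarrow> A ** B = B ** A"
  using assms SL2_not_anticommute[OF assms] by (auto simp: psl_mult psl_eq_iff)

definition torsion :: "('a, 'b) monoid_scheme \<Rightarrow> 'a \<Rightarrow> bool" where
  "torsion G x \<longleftrightarrow> (\<exists>n::nat. n > 0 \<and> x [^]\<^bsub>G\<^esub> n = \<one>\<^bsub>G\<^esub>)"

text \<open>Chebyshev polynomials of the second kind: cheb t n = U_(n-1)(t/2).\<close>
fun cheb :: "real \<Rightarrow> nat \<Rightarrow> real" where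
  "cheb t 0 = 0"
| "cheb t (Suc 0) = 1"
| "cheb t (Suc (Suc n)) = t * cheb t (Suc n) - cheb t n"

lemma SL2R_pow_cheb:
  assumes "det A = 1"
  shows "A [^]\<^bsub>SL2R\<^esub> Suc n = cheb (trace A) (Suc n) *\<^sub>R A - cheb (trace A) n *\<^sub>R mat 1"
proof (induction n)
  case 0
  then show ?case by simp
next
  case (Suc n)
  have "A [^]\<^bsub>SL2R\<^esub> Suc (Suc n) = A [^]\<^bsub>SL2R\<^esub> Suc n ** A"
    using SL.nat_pow_Suc[of A "Suc n"] by simp
  also have "\<dots> = (cheb (trace A) (Suc n) *\<^sub>R A - cheb (trace A) n *\<^sub>R mat 1) ** A"
    by (simp only: Suc.IH)
  also have "\<dots> = cheb (trace A) (Suc (Suc n)) *\<^sub>R A - cheb (trace A) (Suc n) *\<^sub>R mat 1"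
  proof -
    obtain a b c d where A: "A = mat2 a b c d" by (rule mat2_cases)
    have "b * c = a * d - 1" using assms by (simp add: A det_mat2)
    then show ?thesis
      by (simp add: A vec_eq_iff forall_2 matrix_matrix_mult_def sum_2 mat_def trace_mat2 algebra_simps,
          algebra)
  qed
  finally show ?case .
qed

lemma cheb_increasing:
  assumes "t \<ge> 2"
  shows "0 \<le> cheb t n \<and> cheb t n + 1 \<le> cheb t (Suc n)"
proof (induction n)
  case (Suc n)
  then have "2 * cheb t (Suc n) \<le> t * cheb t (Suc n)" using assms by (intro mult_right_mono) auto
  moreover have "cheb t (Suc (Suc n)) = t * cheb t (Suc n) - cheb t n" by simp
  ultimately show ?case using Suc by linarith
qed simp

lemma abs_trace_lt_2_if_torsion:
  assumes dA: "det A = 1" and ne: "psl A \<noteq> \<one>\<^bsub>PSL2R\<^esub>" and tor: "torsion PSL2R (psl A)"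
  shows "\<bar>trace A\<bar> < 2"
proof -
  obtain n where "psl A [^]\<^bsub>PSL2R\<^esub> Suc n = \<one>\<^bsub>PSL2R\<^esub>"
    using tor unfolding torsion_def by (metis gr0_implies_Suc)
  have "trace B < 2" if dB: "det B = 1" and BA: "psl B = psl A" for B
  proof (rule ccontr)
    assume "\<not> trace B < 2"
    then have U: "cheb (trace B) (Suc n) > 0" using cheb_increasing[of "trace B" n] by simp
    obtain a b c d where B: "B = mat2 a b c d" by (rule mat2_cases)
    have "psl (B [^]\<^bsub>SL2R\<^esub> Suc n) = psl A [^]\<^bsub>PSL2R\<^esub> Suc n"
      by (simp only: psl_pow[OF dB, symmetric] BA)
    then have "psl (B [^]\<^bsub>SL2R\<^esub> Suc n) = psl (mat 1)"
      using \<open>psl A [^]\<^bsub>PSL2R\<^esub> Suc n = \<one>\<^bsub>PSL2R\<^esub>\<close> by (simp add: PSL2R_one)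
    then have "B [^]\<^bsub>SL2R\<^esub> Suc n = mat 1 \<or> B [^]\<^bsub>SL2R\<^esub> Suc n = - mat 1"
      by (auto simp: psl_eq_iff)
    then have "(B [^]\<^bsub>SL2R\<^esub> Suc n)$1$2 = 0 \<and> (B [^]\<^bsub>SL2R\<^esub> Suc n)$2$1 = 0
        \<and> (B [^]\<^bsub>SL2R\<^esub> Suc n)$1$1 = (B [^]\<^bsub>SL2R\<^esub> Suc n)$2$2"
      by (auto simp: mat_def)
    then have "cheb (trace B) (Suc n) * b = 0 \<and> cheb (trace B) (Suc n) * c = 0
        \<and> cheb (trace B) (Suc n) * a = cheb (trace B) (Suc n) * d"
      unfolding SL2R_pow_cheb[OF dB] by (simp add: B mat_def)
    then have "b = 0 \<and> c = 0 \<and> a = d" using U by simp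
    moreover have "nonscalar B" using ne BA dB by (simp add: nonscalar_iff_psl_ne_one)
    ultimately show False by (simp add: nonscalar_def B)
  qed
  from this[of A] this[of "- A"] show ?thesis
    using dA by (auto simp: det_uminus2 trace_uminus psl_eq_iff)
qed

lemma not_torsion_if_abs_trace_gt_2:
  assumes "det A = 1" "\<bar>trace A\<bar> > 2"
  shows "\<not> torsion PSL2R (psl A)"
  using assms abs_trace_lt_2_if_torsion nonscalar_if_abs_trace_ne_2 nonscalar_iff_psl_ne_one
  by fastforce

lemma abs_less_2_iff_square: "\<bar>t::real\<bar> < 2 \<longleftrightarrow> t\<^sup>2 < 4"
  using abs_le_square_iff[of 2 t] by (simp add: not_le[symmetric])

lemma abs_greater_2_iff_square: "\<bar>t::real\<bar> > 2 \<longleftrightarrow> t\<^sup>2 > 4"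
  using abs_le_square_iff[of t 2] by (simp add: not_le[symmetric])

text \<open>In coordinates, tr[A,B] - 2 is the left-hand side below (see trace_commutator_gt_2). Completing
  the square in k = bg - fc shows it is positive, because the discriminant (a-d)^2 + 4bc = (a+d)^2 - 4
  is negative for elliptic A.\<close>
lemma commutator_trace_excess_pos:
  fixes a b c d e f g h :: real
  assumes dA: "a*d - b*c = 1" and tA: "\<bar>a + d\<bar> < 2"
    and nc: "\<not> (b*g - f*c = 0 \<and> f*(a-d) - b*(e-h) = 0 \<and> c*(e-h) - g*(a-d) = 0)"
  shows "(b*g - f*c)\<^sup>2 + (f*(a-d) - b*(e-h))*(c*(e-h) - g*(a-d)) > 0"
proof -
  define k where "k = b*g - f*c"
  define l where "l = f*(a-d) - b*(e-h)"
  define m where "m = c*(e-h) - g*(a-d)"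
  define \<alpha> where "\<alpha> = a-d"
  have orth: "\<alpha>*k + l*c + m*b = 0" unfolding k_def l_def m_def \<alpha>_def by (simp add: algebra_simps)
  have Q: "\<alpha>\<^sup>2 + 4*b*c < 0"
  proof -
    have "\<alpha>\<^sup>2 + 4*b*c = (a+d)\<^sup>2 - 4" using dA unfolding \<alpha>_def by (simp add: power2_eq_square algebra_simps)
    moreover have "(a+d)\<^sup>2 < 4" using tA by (simp add: abs_less_2_iff_square)
    ultimately show ?thesis by simp
  qed
  then have b0: "b \<noteq> 0" by (auto simp: not_less)
  have key: "4*b\<^sup>2*(k\<^sup>2 + l*m) = (2*b*k - \<alpha>*l)\<^sup>2 - (\<alpha>\<^sup>2 + 4*b*c)*l\<^sup>2"
  proof -
    have mb: "m*b = -\<alpha>*k - l*c" using orth by linarith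
    have "b\<^sup>2*(l*m) = b*l*(m*b)" by (simp add: power2_eq_square algebra_simps)
    also have "\<dots> = b*l*(-\<alpha>*k - l*c)" by (simp only: mb)
    finally show ?thesis by (simp add: power2_eq_square algebra_simps)
  qed
  have nn: "- (\<alpha>\<^sup>2 + 4*b*c)*l\<^sup>2 \<ge> 0" using Q by simp
  have "4*b\<^sup>2*(k\<^sup>2 + l*m) \<ge> 0" unfolding key using nn zero_le_power2[of "2*b*k - \<alpha>*l"] by linarith
  then have "k\<^sup>2 + l*m \<ge> 0" using b0 by (simp add: zero_le_mult_iff)
  moreover have "k\<^sup>2 + l*m \<noteq> 0"
  proof
    assume "k\<^sup>2 + l*m = 0"
    then have "(2*b*k - \<alpha>*l)\<^sup>2 - (\<alpha>\<^sup>2 + 4*b*c)*l\<^sup>2 = 0" using key by simp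
    then have "(2*b*k - \<alpha>*l)\<^sup>2 = 0 \<and> (\<alpha>\<^sup>2 + 4*b*c)*l\<^sup>2 = 0"
      using nn zero_le_power2[of "2*b*k - \<alpha>*l"] by linarith
    then have "l = 0" "k = 0" using Q b0 by auto
    then have "m = 0" using orth b0 by simp
    then show False using nc \<open>k = 0\<close> \<open>l = 0\<close> by (simp add: k_def l_def m_def)
  qed
  ultimately show ?thesis unfolding k_def l_def m_def by linarith
qed

lemma trace_commutator_gt_2:
  fixes A B :: "real^2^2"
  assumes "det A = 1" "det B = 1" "\<bar>trace A\<bar> < 2" "A ** B \<noteq> B ** A"
  shows "trace (A ** B ** adj2 A ** adj2 B) > 2"
proof -
  obtain a b c d where A: "A = mat2 a b c d" by (rule mat2_cases)
  obtain e f g h where B: "B = mat2 e f g h" by (rule mat2_cases)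
  have dA: "a*d - b*c = 1" and dB: "e*h - f*g = 1" using assms by (simp_all add: A B det_mat2)
  have "\<not> (b*g - f*c = 0 \<and> f*(a-d) - b*(e-h) = 0 \<and> c*(e-h) - g*(a-d) = 0)"
    using assms(4) unfolding A B mat2_mult mat2_eq_iff by (auto simp: algebra_simps)
  moreover have "trace (A ** B ** adj2 A ** adj2 B)
      = 2 + ((b*g - f*c)\<^sup>2 + (f*(a-d) - b*(e-h))*(c*(e-h) - g*(a-d)))"
    unfolding A B adj2_mat2 mat2_mult trace_mat2 using dA dB by algebra
  ultimately show ?thesis
    using commutator_trace_excess_pos[OF dA] assms(3) by (simp add: A trace_mat2)
qed

lemma adj2_eq_trace_minus: "adj2 A = trace A *\<^sub>R mat 1 - A"
  by (simp add: adj2_def vec_eq_iff forall_2 mat_def trace_def sum_2)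

lemma pencil_same_trace_det:
  fixes X Y :: "real^2^2"
  assumes dX: "det X = 1" and tX: "(trace X)\<^sup>2 \<noteq> 4"
    and Y: "Y = \<alpha> *\<^sub>R mat 1 + \<beta> *\<^sub>R X" and dY: "det Y = 1" and tY: "trace Y = trace X"
  shows "Y = X \<or> Y = adj2 X"
proof -
  obtain x1 x2 x3 x4 where X: "X = mat2 x1 x2 x3 x4" by (rule mat2_cases)
  define t where "t = x1 + x4"
  have dx: "x1*x4 - x2*x3 = 1" using dX by (simp add: X det_mat2)
  have Ym: "Y = mat2 (\<alpha> + \<beta>*x1) (\<beta>*x2) (\<beta>*x3) (\<alpha> + \<beta>*x4)"
    by (simp add: Y X vec_eq_iff forall_2 mat_def)
  have e1: "2*\<alpha> = t*(1 - \<beta>)" using tY by (simp add: Ym X trace_mat2 t_def algebra_simps)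
  have "\<alpha>\<^sup>2 + \<alpha>*\<beta>*t + \<beta>\<^sup>2 = 1"
  proof -
    have "(\<alpha> + \<beta>*x1)*(\<alpha> + \<beta>*x4) - (\<beta>*x2)*(\<beta>*x3) = 1" using dY by (simp add: Ym det_mat2)
    then show ?thesis using dx unfolding t_def by algebra
  qed
  then have "4 = (2*\<alpha>)\<^sup>2 + 2*(2*\<alpha>)*\<beta>*t + 4*\<beta>\<^sup>2" by (simp add: power2_eq_square algebra_simps)
  then have "(1 - \<beta>\<^sup>2)*(t\<^sup>2 - 4) = 0" unfolding e1 by (simp add: power2_eq_square algebra_simps)
  then have "\<beta> = 1 \<or> \<beta> = -1" using tX by (simp add: X trace_mat2 t_def power2_eq_1_iff)
  then show ?thesis
  proof
    assume "\<beta> = 1"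
    then have "\<alpha> = 0" using e1 by simp
    then show ?thesis using \<open>\<beta> = 1\<close> by (simp add: Y)
  next
    assume "\<beta> = -1"
    then have "\<alpha> = trace X" using e1 by (simp add: X trace_mat2 t_def)
    then show ?thesis using \<open>\<beta> = -1\<close> by (simp add: Y adj2_eq_trace_minus)
  qed
qed

lemma elliptic_hyperbolic_not_commute:
  fixes A X :: "real^2^2"
  assumes dA: "det A = 1" and tA: "\<bar>trace A\<bar> < 2" and dX: "det X = 1" and tX: "\<bar>trace X\<bar> > 2"
  shows "X ** A \<noteq> A ** X"
proof
  assume "X ** A = A ** X"
  then obtain \<alpha> \<beta> where X: "X = \<alpha> *\<^sub>R mat 1 + \<beta> *\<^sub>R A"
    using commute_nonscalar_imp_pencil nonscalar_if_abs_trace_ne_2[OF dA] tA by fastforce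
  obtain a b c d where A: "A = mat2 a b c d" by (rule mat2_cases)
  have da: "a*d - b*c = 1" using dA by (simp add: A det_mat2)
  have Xm: "X = mat2 (\<alpha> + \<beta>*a) (\<beta>*b) (\<beta>*c) (\<alpha> + \<beta>*d)"
    by (simp add: X A vec_eq_iff forall_2 mat_def)
  have "(\<alpha> + \<beta>*a)*(\<alpha> + \<beta>*d) - (\<beta>*b)*(\<beta>*c) = 1" using dX by (simp add: Xm det_mat2)
  then have "(trace X)\<^sup>2 - 4 = \<beta>\<^sup>2 * ((trace A)\<^sup>2 - 4)"
    using da unfolding Xm A trace_mat2 by algebra
  moreover have "(trace A)\<^sup>2 < 4" "(trace X)\<^sup>2 > 4"
    using tA tX by (simp_all add: abs_less_2_iff_square abs_greater_2_iff_square)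
  ultimately show False by (smt (verit) mult_nonneg_nonpos zero_le_power2)
qed

lemma trace_zero_if_conj_adj2:
  assumes "nonscalar X" "A ** X = adj2 X ** A"
  shows "trace A = 0"
proof -
  obtain a b c d where A: "A = mat2 a b c d" by (rule mat2_cases)
  obtain x1 x2 x3 x4 where X: "X = mat2 x1 x2 x3 x4" by (rule mat2_cases)
  have "a*x1 + b*x3 = x4*a - x2*c" "a*x2 + b*x4 = x4*b - x2*d"
    "c*x1 + d*x3 = -x3*a + x1*c" "c*x2 + d*x4 = -x3*b + x1*d"
    using assms(2) by (simp_all add: A X adj2_mat2 mat2_mult mat2_eq_iff)
  then have "(a + d)*x2 = 0" "(a + d)*x3 = 0" "(a + d)*(x1 - x4) = 0" by algebra+
  moreover have "x2 \<noteq> 0 \<or> x3 \<noteq> 0 \<or> x1 \<noteq> x4" using assms(1) by (simp add: nonscalar_def X)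
  ultimately show ?thesis by (auto simp: A trace_mat2)
qed

text \<open>The conjugate lies in the pencil of X, so it is X itself (impossible, as A would then commute
  with X) or its inverse.\<close>
lemma trace_zero_if_commute_conj:
  assumes dA: "det A = 1" and tA: "\<bar>trace A\<bar> < 2" and dX: "det X = 1" and tX: "\<bar>trace X\<bar> > 2"
    and comm: "X ** (A ** X ** adj2 A) = (A ** X ** adj2 A) ** X"
  shows "trace A = 0"
proof -
  define Y where "Y = A ** X ** adj2 A"
  have nX: "nonscalar X" using nonscalar_if_abs_trace_ne_2[OF dX] tX by simp
  obtain \<alpha> \<beta> where "Y = \<alpha> *\<^sub>R mat 1 + \<beta> *\<^sub>R X"
    using commute_nonscalar_imp_pencil[OF nX] comm by (metis Y_def)
  moreover have "det Y = 1" by (simp add: Y_def det_mul dA dX det_adj2)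
  moreover have "trace Y = trace X" by (simp add: Y_def trace_conj_adj2[OF dA])
  moreover have "(trace X)\<^sup>2 \<noteq> 4" using tX by (simp add: abs_greater_2_iff_square)
  ultimately have "Y = X \<or> Y = adj2 X" using pencil_same_trace_det[OF dX] by blast
  moreover have YA: "Y ** A = A ** X"
    by (simp add: Y_def matrix_mul_assoc[symmetric] adj2_mult_self[OF dA])
  ultimately show ?thesis
    using elliptic_hyperbolic_not_commute[OF dA tA dX tX] trace_zero_if_conj_adj2[OF nX] by auto
qed

section \<open>Centralizers, finite index and dihedral groups\<close>

definition centralizer :: "('a, 'b) monoid_scheme \<Rightarrow> 'a \<Rightarrow> 'a set" where
  "centralizer G z = {w \<in> carrier G. w \<otimes>\<^bsub>G\<^esub> z = z \<otimes>\<^bsub>G\<^esub> w}"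

lemma (in group) subgroup_centralizer:
  assumes z: "z \<in> carrier G" shows "subgroup (centralizer G z) G"
proof (rule subgroupI)
  fix w assume "w \<in> centralizer G z"
  then have wc: "w \<in> carrier G" and e: "w \<otimes> z = z \<otimes> w" by (auto simp: centralizer_def)
  have "inv w \<otimes> z = inv w \<otimes> (z \<otimes> w) \<otimes> inv w" using wc z by (simp add: m_assoc)
  also have "\<dots> = z \<otimes> inv w" using wc z by (simp add: e[symmetric] m_assoc[symmetric])
  finally show "inv w \<in> centralizer G z" using wc by (simp add: centralizer_def)
next
  fix a b assume "a \<in> centralizer G z" "b \<in> centralizer G z"
  then show "a \<otimes> b \<in> centralizer G z"
    using z by (auto simp: centralizer_def m_assoc) (metis m_assoc)
qed (use z in \<open>auto simp: centralizer_def\<close>)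

lemma (in group) abelian_set_generate:
  assumes H: "H \<subseteq> carrier G" and comm: "\<And>x y. x \<in> H \<Longrightarrow> y \<in> H \<Longrightarrow> x \<otimes> y = y \<otimes> x"
  shows "abelian_set G (generate G H)"
proof -
  have gen_centr: "generate G H \<subseteq> centralizer G s" if "s \<in> carrier G" "H \<subseteq> centralizer G s" for s
    using that by (intro generate_subgroup_incl subgroup_centralizer)
  have "H \<subseteq> centralizer G s" if s: "s \<in> generate G H" for s
  proof
    fix x assume "x \<in> H"
    then have "generate G H \<subseteq> centralizer G x"
      using H comm by (intro gen_centr) (auto simp: centralizer_def)
    then show "x \<in> centralizer G s" using s \<open>x \<in> H\<close> H by (auto simp: centralizer_def)
  qed
  then show ?thesis
    using gen_centr generate_in_carrier[OF H] unfolding abelian_set_def centralizer_def by blast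
qed

lemma rcosets_carrier_update: "rcosets\<^bsub>G\<lparr>carrier := S\<rparr>\<^esub> K = (\<lambda>a. K #>\<^bsub>G\<^esub> a) ` S"
  unfolding RCOSETS_def r_coset_def by auto

text \<open>Pigeonhole on the cosets of the powers of x.\<close>
lemma (in group) pow_mem_if_finite_rcosets:
  assumes K: "subgroup K G" and S: "subgroup S G" and fin: "finite (rcosets\<^bsub>G\<lparr>carrier := S\<rparr>\<^esub> K)"
    and x: "x \<in> S"
  shows "\<exists>n::nat. n > 0 \<and> x [^] n \<in> K"
proof -
  have xc: "x \<in> carrier G" using S x subgroup.subset by blast
  define f where "f = (\<lambda>n::nat. K #> x [^] n)"
  have "x [^] n \<in> S" for n :: nat
    using subgroup_int_pow_closed[OF S x, of "int n"] by (simp add: int_pow_int)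
  then have "range f \<subseteq> rcosets\<^bsub>G\<lparr>carrier := S\<rparr>\<^esub> K"
    unfolding rcosets_carrier_update f_def by auto
  then have "\<not> inj f" using fin finite_subset finite_imageD[of f UNIV] by (metis infinite_UNIV_nat)
  then obtain i j where ij: "i < j" "f i = f j" unfolding inj_def by (metis linorder_neqE_nat)
  then have "x [^] j \<in> K #> x [^] i" using rcos_self[OF _ K] xc by (metis f_def nat_pow_closed)
  then have "x [^] j \<otimes> inv (x [^] i) \<in> K" using subgroup.rcos_module_imp[OF K] xc by simp
  moreover have "x [^] j \<otimes> inv (x [^] i) = x [^] (j - i)"
    using nat_pow_mult[OF xc, of "j - i" i] ij(1) xc by (simp add: inv_solve_right')
  ultimately show ?thesis using ij(1) by (intro exI[of _ "j - i"]) auto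
qed

lemma (in group) conj_involution_mem_generate_mult:
  assumes x: "x \<in> carrier G" and y: "y \<in> carrier G" and xx: "x \<otimes> x = \<one>" and yy: "y \<otimes> y = \<one>"
    and k: "k \<in> generate G {x \<otimes> y}"
  shows "x \<otimes> k \<otimes> x \<in> generate G {x \<otimes> y}"
  using k
proof (induction rule: generate.induct)
  case one
  then show ?case using x xx by (simp add: generate.one)
next
  case (incl h)
  have "inv (x \<otimes> y) = y \<otimes> x" using x y xx yy by (simp add: inv_mult_group inv_equality)
  then have "x \<otimes> (x \<otimes> y) \<otimes> x = inv (x \<otimes> y)" using x y xx by (simp add: m_assoc[symmetric])
  then show ?case using incl generate.inv[of "x \<otimes> y" "{x \<otimes> y}" G] by simp
next
  case (inv h)
  have "inv (x \<otimes> y) = y \<otimes> x" using x y xx yy by (simp add: inv_mult_group inv_equality)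
  then have "x \<otimes> inv (x \<otimes> y) \<otimes> x = x \<otimes> y" using x y xx by (simp add: m_assoc)
  then show ?case using inv generate.incl[of "x \<otimes> y" "{x \<otimes> y}" G] by simp
next
  case (eng h1 h2)
  have "h1 \<in> carrier G" "h2 \<in> carrier G"
    using eng.hyps generate_in_carrier[of "{x \<otimes> y}"] x y by auto
  moreover have "x \<otimes> (x \<otimes> z) = z" if "z \<in> carrier G" for z
    using x xx that by (simp add: m_assoc[symmetric])
  ultimately have "x \<otimes> (h1 \<otimes> h2) \<otimes> x = (x \<otimes> h1 \<otimes> x) \<otimes> (x \<otimes> h2 \<otimes> x)"
    using x by (simp add: m_assoc)
  then show ?case using eng.IH by (simp add: generate.eng)
qed

lemma (in group) generate_involutions_subset:
  assumes x: "x \<in> carrier G" and y: "y \<in> carrier G" and xx: "x \<otimes> x = \<one>" and yy: "y \<otimes> y = \<one>"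
  shows "generate G {x, y} \<subseteq> generate G {x \<otimes> y} \<union> (generate G {x \<otimes> y} #> x)"
proof
  let ?K = "generate G {x \<otimes> y}"
  have K: "subgroup ?K G" using x y by (simp add: generate_is_subgroup)
  have Kc: "k \<in> carrier G" if "k \<in> ?K" for k by (rule subgroup.mem_carrier[OF K that])
  have ix: "inv x = x" and iy: "inv y = y" using inv_equality[OF xx x x] inv_equality[OF yy y y] .
  have xK: "x \<in> ?K #> x" by (rule rcos_self[OF x K])
  have yK: "y \<in> ?K #> x"
  proof -
    have "inv (x \<otimes> y) \<otimes> x = y" using x y xx by (simp add: inv_mult_group ix iy m_assoc)
    moreover have "inv (x \<otimes> y) \<in> ?K" by (rule generate.inv) simp
    ultimately show ?thesis unfolding r_coset_def by force
  qed
  fix s assume "s \<in> generate G {x, y}"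
  then show "s \<in> ?K \<union> (?K #> x)"
  proof (induction rule: generate.induct)
    case one
    then show ?case by (simp add: generate.one)
  next
    case (incl h)
    then show ?case using xK yK by auto
  next
    case (inv h)
    then show ?case using xK yK ix iy by auto
  next
    case (eng h1 h2)
    have conj: "x \<otimes> k \<otimes> x \<in> ?K" if "k \<in> ?K" for k
      by (rule conj_involution_mem_generate_mult[OF x y xx yy that])
    from eng.IH show ?case
    proof (elim UnE)
      assume "h1 \<in> ?K" "h2 \<in> ?K"
      then show ?thesis by (simp add: subgroup.m_closed[OF K])
    next
      assume "h1 \<in> ?K" "h2 \<in> ?K #> x"
      then obtain k2 where k2: "k2 \<in> ?K" "h2 = k2 \<otimes> x" by (auto simp: r_coset_def)
      then have "h1 \<otimes> h2 = (h1 \<otimes> k2) \<otimes> x" using \<open>h1 \<in> ?K\<close> Kc x by (simp add: m_assoc)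
      then show ?thesis using \<open>h1 \<in> ?K\<close> k2(1) subgroup.m_closed[OF K]
        by (auto simp: r_coset_def)
    next
      assume "h1 \<in> ?K #> x" "h2 \<in> ?K"
      then obtain k1 where k1: "k1 \<in> ?K" "h1 = k1 \<otimes> x" by (auto simp: r_coset_def)
      then have "h1 \<otimes> h2 = (k1 \<otimes> (x \<otimes> h2 \<otimes> x)) \<otimes> x"
        using \<open>h2 \<in> ?K\<close> Kc x xx by (simp add: m_assoc)
      then show ?thesis using k1(1) conj[OF \<open>h2 \<in> ?K\<close>] subgroup.m_closed[OF K]
        by (auto simp: r_coset_def)
    next
      assume "h1 \<in> ?K #> x" "h2 \<in> ?K #> x"
      then obtain k1 k2 where k: "k1 \<in> ?K" "h1 = k1 \<otimes> x" "k2 \<in> ?K" "h2 = k2 \<otimes> x"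
        by (auto simp: r_coset_def)
      then have "h1 \<otimes> h2 = k1 \<otimes> (x \<otimes> k2 \<otimes> x)" using Kc x xx by (simp add: m_assoc)
      then show ?thesis using k(1) conj[OF k(3)] subgroup.m_closed[OF K] by simp
    qed
  qed
qed

lemma (in group) virtually_abelian_generate_involutions:
  assumes x: "x \<in> carrier G" and y: "y \<in> carrier G" and xx: "x \<otimes> x = \<one>" and yy: "y \<otimes> y = \<one>"
  shows "virtually_abelian G (generate G {x, y})"
  unfolding virtually_abelian_def
proof (intro exI conjI)
  let ?K = "generate G {x \<otimes> y}" and ?S = "generate G {x, y}"
  show K: "subgroup ?K G" using x y by (simp add: generate_is_subgroup)
  have "x \<otimes> y \<in> ?S" by (intro generate.eng generate.incl) auto
  then show "?K \<subseteq> ?S" using x y by (intro generate_subgroup_incl generate_is_subgroup) auto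
  show "abelian_set G ?K" using x y by (intro abelian_set_generate) auto
  have "rcosets\<^bsub>G\<lparr>carrier := ?S\<rparr>\<^esub> ?K \<subseteq> {?K, ?K #> x}"
  proof
    fix C assume "C \<in> rcosets\<^bsub>G\<lparr>carrier := ?S\<rparr>\<^esub> ?K"
    then obtain s where "s \<in> ?S" "C = ?K #> s" unfolding rcosets_carrier_update by auto
    moreover have "?K #> s = ?K" if "s \<in> ?K" using subgroup.rcos_const[OF K is_group that] .
    moreover have "?K #> s = ?K #> x" if "s \<in> ?K #> x"
      using repr_independence[OF that x K] by simp
    moreover have "s \<in> ?K \<or> s \<in> ?K #> x"
      using generate_involutions_subset[OF assms] \<open>s \<in> ?S\<close> by blast
    ultimately show "C \<in> {?K, ?K #> x}" by auto
  qed
  then show "finite (rcosets\<^bsub>G\<lparr>carrier := ?S\<rparr>\<^esub> ?K)" by (rule finite_subset) simp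
qed

lemma (in group) commute_mult_right_iff:
  assumes "x \<in> carrier G" "y \<in> carrier G"
  shows "x \<otimes> (x \<otimes> y) = (x \<otimes> y) \<otimes> x \<longleftrightarrow> x \<otimes> y = y \<otimes> x"
  using assms by (simp add: m_assoc)

lemma (in group) commute_mult_left_iff:
  assumes "x \<in> carrier G" "y \<in> carrier G"
  shows "y \<otimes> (x \<otimes> y) = (x \<otimes> y) \<otimes> y \<longleftrightarrow> x \<otimes> y = y \<otimes> x"
  using assms by (auto simp: m_assoc[symmetric])

lemma (in group) generate_pair_eqI:
  assumes "{a, b} \<subseteq> generate G {x, y}" "{x, y} \<subseteq> generate G {a, b}"
    and "{a, b, x, y} \<subseteq> carrier G"
  shows "generate G {a, b} = generate G {x, y}"
  using assms by (intro equalityI generate_subgroup_incl generate_is_subgroup) auto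

lemma (in group) generate_pair_mult_right:
  assumes x: "x \<in> carrier G" and y: "y \<in> carrier G"
  shows "generate G {x, x \<otimes> y} = generate G {x, y}"
proof (rule generate_pair_eqI)
  have "inv x \<otimes> (x \<otimes> y) \<in> generate G {x, x \<otimes> y}"
    by (intro generate.eng generate.inv generate.incl) auto
  then show "{x, y} \<subseteq> generate G {x, x \<otimes> y}"
    using x y by (auto simp: m_assoc[symmetric] intro: generate.incl)
qed (use x y in \<open>auto intro: generate.incl generate.eng\<close>)

lemma (in group) generate_pair_mult_left:
  assumes x: "x \<in> carrier G" and y: "y \<in> carrier G"
  shows "generate G {x \<otimes> y, y} = generate G {x, y}"
proof (rule generate_pair_eqI)
  have "(x \<otimes> y) \<otimes> inv y \<in> generate G {x \<otimes> y, y}"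
    by (intro generate.eng generate.inv generate.incl) auto
  then show "{x, y} \<subseteq> generate G {x \<otimes> y, y}"
    using x y by (auto simp: m_assoc intro: generate.incl)
qed (use x y in \<open>auto intro: generate.incl generate.eng\<close>)

section \<open>Virtually abelian subgroups of PSL(2,R)\<close>

lemma nonscalar_pow_if_not_torsion:
  assumes dC: "det C = 1" and tC: "\<not> torsion PSL2R (psl C)" and n: "(n::nat) > 0"
  shows "nonscalar (C [^]\<^bsub>SL2R\<^esub> n)"
proof -
  have "psl C [^]\<^bsub>PSL2R\<^esub> n \<noteq> \<one>\<^bsub>PSL2R\<^esub>"
  proof
    assume "psl C [^]\<^bsub>PSL2R\<^esub> n = \<one>\<^bsub>PSL2R\<^esub>"
    with n have "torsion PSL2R (psl C)" unfolding torsion_def by blast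
    with tC show False by simp
  qed
  moreover have "det (C [^]\<^bsub>SL2R\<^esub> n) = 1" using SL.nat_pow_closed[of C n] dC by simp
  ultimately show ?thesis by (simp add: nonscalar_iff_psl_ne_one psl_pow[OF dC])
qed

text \<open>Suitable powers of x and y lie in an abelian subgroup; as these powers are not central, their
  commutants are abelian, and commutation passes from the powers back to x and y.\<close>
lemma virtually_abelian_nontorsion_commute:
  assumes VA: "virtually_abelian PSL2R S" and S: "subgroup S PSL2R"
    and x: "x \<in> S" and y: "y \<in> S" and tx: "\<not> torsion PSL2R x" and ty: "\<not> torsion PSL2R y"
  shows "x \<otimes>\<^bsub>PSL2R\<^esub> y = y \<otimes>\<^bsub>PSL2R\<^esub> x"
proof -
  obtain K where K: "subgroup K PSL2R" "abelian_set PSL2R K"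
    "finite (rcosets\<^bsub>PSL2R\<lparr>carrier := S\<rparr>\<^esub> K)"
    using VA unfolding virtually_abelian_def by blast
  obtain i :: nat where i: "i > 0" "x [^]\<^bsub>PSL2R\<^esub> i \<in> K"
    using P.pow_mem_if_finite_rcosets[OF K(1) S K(3) x] by blast
  obtain j :: nat where j: "j > 0" "y [^]\<^bsub>PSL2R\<^esub> j \<in> K"
    using P.pow_mem_if_finite_rcosets[OF K(1) S K(3) y] by blast
  obtain A B where A: "det A = 1" "x = psl A" and B: "det B = 1" "y = psl B"
    using S x y subgroup.mem_carrier PSL2R_obtain by metis
  define Ai where "Ai = A [^]\<^bsub>SL2R\<^esub> i"
  define Bj where "Bj = B [^]\<^bsub>SL2R\<^esub> j"
  have dAi: "det Ai = 1" and dBj: "det Bj = 1"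
    using SL.nat_pow_closed A(1) B(1) by (simp_all add: Ai_def Bj_def)
  have "psl Ai \<otimes>\<^bsub>PSL2R\<^esub> psl Bj = psl Bj \<otimes>\<^bsub>PSL2R\<^esub> psl Ai"
    using K(2) i(2) j(2) A B unfolding abelian_set_def by (simp add: psl_pow Ai_def Bj_def)
  then have "Ai ** Bj = Bj ** Ai" using psl_commute_iff[OF dAi dBj] by simp
  moreover have "nonscalar Ai" "nonscalar Bj"
    using nonscalar_pow_if_not_torsion[OF A(1) _ i(1)] nonscalar_pow_if_not_torsion[OF B(1) _ j(1)]
      tx ty A(2) B(2)
    by (simp_all add: Ai_def Bj_def)
  moreover have "A ** Ai = Ai ** A" "B ** Bj = Bj ** B"
    using SL.nat_pow_comm[of A 1 i] SL.nat_pow_comm[of B 1 j] A(1) B(1) by (simp_all add: Ai_def Bj_def)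
  ultimately have "A ** B = B ** A" by (metis commute_nonscalar_trans)
  then show ?thesis using psl_commute_iff[OF A(1) B(1)] A B by simp
qed

text \<open>Conjugating X by M gives another non-torsion element of S, which must commute with X.\<close>
lemma trace_zero_if_elliptic_in_virtually_abelian:
  assumes VA: "virtually_abelian PSL2R S" and S: "subgroup S PSL2R"
    and dX: "det X = 1" and tX: "\<bar>trace X\<bar> > 2" and XS: "psl X \<in> S"
    and dM: "det M = 1" and tM: "\<bar>trace M\<bar> < 2" and MS: "psl M \<in> S"
  shows "trace M = 0"
proof -
  define Y where "Y = M ** X ** adj2 M"
  have dY: "det Y = 1" by (simp add: Y_def det_mul dM dX det_adj2)
  have tY: "trace Y = trace X" using trace_conj_adj2[OF dM] by (simp add: Y_def)
  have "psl Y = psl M \<otimes>\<^bsub>PSL2R\<^esub> psl X \<otimes>\<^bsub>PSL2R\<^esub> inv\<^bsub>PSL2R\<^esub> (psl M)"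
    using dM dX by (simp add: psl_inv psl_mult det_mul det_adj2 Y_def)
  then have YS: "psl Y \<in> S" using MS XS S by (simp add: subgroup.m_closed subgroup.m_inv_closed)
  have "psl X \<otimes>\<^bsub>PSL2R\<^esub> psl Y = psl Y \<otimes>\<^bsub>PSL2R\<^esub> psl X"
    using virtually_abelian_nontorsion_commute[OF VA S XS YS] not_torsion_if_abs_trace_gt_2 dX dY tX tY
    by simp
  then have "X ** Y = Y ** X" using psl_commute_iff[OF dX dY] by simp
  then show ?thesis using trace_zero_if_commute_conj[OF dM tM dX tX] by (simp add: Y_def)
qed

lemma trace_zero_if_noncommuting_torsion:
  assumes VA: "virtually_abelian PSL2R S" and S: "subgroup S PSL2R"
    and dA: "det A = 1" and AS: "psl A \<in> S" and tA: "torsion PSL2R (psl A)"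
    and dB: "det B = 1" and BS: "psl B \<in> S" and tB: "torsion PSL2R (psl B)"
    and nc: "A ** B \<noteq> B ** A"
  shows "trace A = 0" "trace B = 0"
proof -
  have ncP: "psl A \<otimes>\<^bsub>PSL2R\<^esub> psl B \<noteq> psl B \<otimes>\<^bsub>PSL2R\<^esub> psl A"
    using nc psl_commute_iff[OF dA dB] by simp
  have "psl A \<noteq> \<one>\<^bsub>PSL2R\<^esub>" "psl B \<noteq> \<one>\<^bsub>PSL2R\<^esub>"
    using ncP psl_in_carrier[OF dA] psl_in_carrier[OF dB] by auto
  then have eA: "\<bar>trace A\<bar> < 2" and eB: "\<bar>trace B\<bar> < 2"
    using abs_trace_lt_2_if_torsion dA dB tA tB by auto
  define X where "X = A ** B ** adj2 A ** adj2 B"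
  have dX: "det X = 1" by (simp add: X_def det_mul dA dB det_adj2)
  have tX: "\<bar>trace X\<bar> > 2" using trace_commutator_gt_2[OF dA dB eA nc] by (simp add: X_def)
  have "psl X = psl A \<otimes>\<^bsub>PSL2R\<^esub> psl B \<otimes>\<^bsub>PSL2R\<^esub> inv\<^bsub>PSL2R\<^esub> (psl A)
      \<otimes>\<^bsub>PSL2R\<^esub> inv\<^bsub>PSL2R\<^esub> (psl B)"
    using dA dB by (simp add: psl_inv psl_mult det_mul det_adj2 X_def)
  then have XS: "psl X \<in> S" using AS BS S by (simp add: subgroup.m_closed subgroup.m_inv_closed)
  show "trace A = 0" "trace B = 0"
    using trace_zero_if_elliptic_in_virtually_abelian[OF VA S dX tX XS] dA eA AS dB eB BS by auto
qed

section \<open>Half-turns and geodesics of the upper half-plane\<close>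

definition gen_circle :: "real \<Rightarrow> real \<Rightarrow> real \<Rightarrow> complex set" where
  "gen_circle \<alpha> \<beta> \<gamma> = {z. Im z > 0 \<and> \<alpha> * (Re z ^ 2 + Im z ^ 2) + \<beta> * Re z + \<gamma> = 0}"

lemma mob_traceless:
  fixes p q r x y :: real
  assumes pqr: "p^2 + q*r = -1" and r: "r > 0" and y: "y > 0"
  defines "N \<equiv> (r*x - p)^2 + (r*y)^2"
  defines "U \<equiv> (p*x + q)*(r*x - p) + (p*y)*(r*y)"
  shows "N > 0" "mob (mat2 p q r (-p)) (Complex x y) = Complex (U/N) (y/N)"
proof -
  show Np: "N > 0" unfolding N_def using r y by (simp add: add_nonneg_pos)
  have "(p*y)*(r*x - p) - (p*x + q)*(r*y) = y" using pqr by algebra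
  then show "mob (mat2 p q r (-p)) (Complex x y) = Complex (U/N) (y/N)"
    unfolding mob_mat2 using Np
    by (simp add: complex_eq_iff Re_divide Im_divide N_def U_def power2_eq_square algebra_simps)
qed

lemma mob_upper_half:
  assumes d: "det M = 1" and z: "Im z > 0"
  shows "of_real (M$2$1) * z + of_real (M$2$2) \<noteq> 0" "Im (mob M z) > 0"
proof -
  obtain a b c e where M: "M = mat2 a b c e" by (rule mat2_cases)
  have de: "a*e - b*c = 1" using d by (simp add: M det_mat2)
  show D: "of_real (M$2$1) * z + of_real (M$2$2) \<noteq> 0"
  proof
    assume H: "of_real (M$2$1) * z + of_real (M$2$2) = 0"
    then have "Im (of_real c * z + of_real e) = 0" "Re (of_real c * z + of_real e) = 0" by (simp_all add: M)
    then have "c = 0" "e = 0" using z by auto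
    then show False using de by simp
  qed
  have num: "Im (of_real a * z + of_real b) * Re (of_real c * z + of_real e) - Re (of_real a * z + of_real b) * Im (of_real c * z + of_real e) = Im z"
    using de by (simp add: algebra_simps) (metis mult.assoc mult.commute mult.left_commute mult_1 distrib_left right_diff_distrib)
  have den: "(Re (of_real c * z + of_real e))^2 + (Im (of_real c * z + of_real e))^2 > 0"
    using D by (simp add: M sum_power2_gt_zero_iff complex_eq_iff del: Re_complex_of_real Im_complex_of_real)
  show "Im (mob M z) > 0" unfolding M mob_mat2 Im_divide num using den z by simp
qed

lemma mob_mult:
  assumes dA: "det A = 1" and dB: "det B = 1" and z: "Im z > 0"
  shows "mob (A ** B) z = mob A (mob B z)"
proof -
  obtain a1 b1 c1 d1 where A: "A = mat2 a1 b1 c1 d1" by (rule mat2_cases)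
  obtain a2 b2 c2 d2 where B: "B = mat2 a2 b2 c2 d2" by (rule mat2_cases)
  have D: "of_real c2 * z + of_real d2 \<noteq> 0" using mob_upper_half(1)[OF dB z] by (simp add: B)
  have wH: "Im (mob B z) > 0" using mob_upper_half(2)[OF dB z] .
  have D': "of_real c1 * mob B z + of_real d1 \<noteq> 0" using mob_upper_half(1)[OF dA wH] by (simp add: A)
  have D'': "of_real c1 * (of_real a2 * z + of_real b2) + of_real d1 * (of_real c2 * z + of_real d2) \<noteq> 0"
  proof -
    have "of_real c1 * (of_real a2 * z + of_real b2) + of_real d1 * (of_real c2 * z + of_real d2)
          = (of_real c1 * mob B z + of_real d1) * (of_real c2 * z + of_real d2)"
      using D by (simp add: B mob_mat2 field_simps)
    then show ?thesis using D D' by simp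
  qed
  define Dz where "Dz = of_real c2 * z + of_real d2"
  define Nz where "Nz = of_real a2 * z + of_real b2"
  have w: "mob B z = Nz / Dz" by (simp add: B mob_mat2 Nz_def Dz_def)
  have n: "of_real a1 * (Nz/Dz) + of_real b1 = (of_real a1 * Nz + of_real b1 * Dz) / Dz"
    using D by (simp add: Dz_def field_simps)
  have d: "of_real c1 * (Nz/Dz) + of_real d1 = (of_real c1 * Nz + of_real d1 * Dz) / Dz"
    using D by (simp add: Dz_def field_simps)
  have "mob A (mob B z) = (of_real a1 * Nz + of_real b1 * Dz) / (of_real c1 * Nz + of_real d1 * Dz)"
    unfolding w A mob_mat2 n d using D by (simp add: Dz_def)
  also have "\<dots> = mob (A ** B) z"
    unfolding A B mat2_mult mob_mat2 Nz_def Dz_def by (simp add: algebra_simps)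
  finally show ?thesis by simp
qed

lemma mob_involution_if_trace_zero:
  assumes d: "det M = 1" and t: "trace M = 0" and z: "Im z > 0"
  shows "mob M (mob M z) = z"
proof -
  have "M ** M = - mat 1" using SL2_cayley_hamilton[OF d] t by simp
  then show ?thesis using mob_mult[OF d d z] by (simp add: mob_uminus mob_def mat_def)
qed

lemma mob_traceless_gen_circle:
  fixes p q r :: real
  assumes pqr: "p^2 + q*r = -1" and r: "r > 0"
    and fp: "Complex (p/r) (1/r) \<in> gen_circle \<alpha> \<beta> \<gamma>" and z: "z \<in> gen_circle \<alpha> \<beta> \<gamma>"
  shows "mob (mat2 p q r (-p)) z \<in> gen_circle \<alpha> \<beta> \<gamma>"
proof -
  obtain x y where zxy: "z = Complex x y" by (cases z)
  have y: "y > 0" and zl: "\<alpha> * (x^2 + y^2) + \<beta> * x + \<gamma> = 0" using z by (auto simp: gen_circle_def zxy)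
  define N where "N = (r*x - p)^2 + (r*y)^2"
  define U where "U = (p*x + q)*(r*x - p) + (p*y)*(r*y)"
  have Np: "N > 0" and w: "mob (mat2 p q r (-p)) z = Complex (U/N) (y/N)"
    using mob_traceless[OF pqr r y, of x] by (simp_all add: zxy N_def U_def)
  have f1: "\<alpha> * ((p/r)^2 + (1/r)^2) + \<beta> * (p/r) + \<gamma> = 0" using fp by (simp add: gen_circle_def)
  have f2: "\<alpha> * (p^2 + 1) + \<beta> * p * r + \<gamma> * r^2 = 0"
  proof -
    have "r^2 * (\<alpha> * ((p/r)^2 + (1/r)^2) + \<beta> * (p/r) + \<gamma>) = \<alpha> * (p^2 + 1) + \<beta> * p * r + \<gamma> * r^2"
      using r by (simp add: power2_eq_square field_simps)
    then show ?thesis using f1 by simp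
  qed
  have f3: "\<alpha> * q - \<beta> * p - \<gamma> * r = 0"
  proof -
    have "r * (\<alpha> * q - \<beta> * p - \<gamma> * r) = 0" using f2 pqr by algebra
    then show ?thesis using r by simp
  qed
  have UU: "U^2 + y^2 = (p^2*(x^2+y^2) + 2*p*q*x + q^2) * N" unfolding U_def N_def using pqr by algebra
  have E: "\<alpha> * (p^2*(x^2+y^2) + 2*p*q*x + q^2) + \<beta> * U + \<gamma> * N = -(\<alpha> * (x^2 + y^2) + \<beta> * x + \<gamma>)"
    unfolding U_def N_def using pqr f2 f3 by algebra
  have "\<alpha> * ((U/N)^2 + (y/N)^2) + \<beta> * (U/N) + \<gamma> = (\<alpha> * (U^2 + y^2) + \<beta> * U * N + \<gamma> * N^2) / N^2"
    using Np by (simp add: power2_eq_square field_simps)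
  also have "\<dots> = N * (\<alpha> * (p^2*(x^2+y^2) + 2*p*q*x + q^2) + \<beta> * U + \<gamma> * N) / N^2"
    unfolding UU by (simp add: power2_eq_square algebra_simps)
  also have "\<dots> = 0" unfolding E zl by simp
  finally show ?thesis unfolding w gen_circle_def using Np y by simp
qed

lemma cmod_eq_iff_circle: "(r::real) \<ge> 0 \<Longrightarrow> cmod (z - of_real c) = r \<longleftrightarrow> (Re z - c)^2 + (Im z)^2 = r^2"
  by (smt (verit, ccfv_SIG) Im_complex_of_real Re_complex_of_real
    cmod_power2 minus_complex.simps(1,2) norm_ge_zero power2_eq_iff_nonneg)

lemma vertical_line_eq_gen_circle: "{z\<in>H2. Re z = c} = gen_circle 0 1 (-c)"
  by (auto simp: gen_circle_def H2_def)

lemma circle_eq_gen_circle: "r > 0 \<Longrightarrow> {z\<in>H2. cmod (z - of_real c) = r} = gen_circle 1 (-2*c) (c^2 - r^2)"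
  by (auto simp: gen_circle_def H2_def cmod_eq_iff_circle power2_eq_square algebra_simps)

lemma geodesic_gen_circle: "geodesic L \<Longrightarrow> \<exists>\<alpha> \<beta> \<gamma>. L = gen_circle \<alpha> \<beta> \<gamma>"
  unfolding geodesic_def using vertical_line_eq_gen_circle circle_eq_gen_circle by blast

lemma geodesic_exists:
  assumes q1: "q1 \<in> H2" and q2: "q2 \<in> H2"
  shows "\<exists>L. geodesic L \<and> q1 \<in> L \<and> q2 \<in> L"
proof (cases "Re q1 = Re q2")
  case True
  then show ?thesis using q1 q2 unfolding geodesic_def by (intro exI[of _ "{z\<in>H2. Re z = Re q1}"]) auto
next
  case False
  define c where "c = ((Re q1)^2 + (Im q1)^2 - (Re q2)^2 - (Im q2)^2) / (2*(Re q1 - Re q2))"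
  define r where "r = cmod (q1 - of_real c)"
  have i1: "Im q1 > 0" using q1 by (simp add: H2_def)
  have rpos: "r > 0" unfolding r_def using i1 by (auto simp: complex_eq_iff)
  have e: "(Re q2 - c)^2 + (Im q2)^2 = (Re q1 - c)^2 + (Im q1)^2"
  proof -
    have "2*(Re q1 - Re q2)*c = (Re q1)^2 + (Im q1)^2 - (Re q2)^2 - (Im q2)^2"
      unfolding c_def using False by simp
    then show ?thesis by (simp add: power2_eq_square algebra_simps)
  qed
  have c2: "cmod (q2 - of_real c) = r" unfolding cmod_eq_iff_circle[OF less_imp_le[OF rpos]]
    unfolding r_def cmod_power2 e by simp
  show ?thesis
  proof (intro exI conjI)
    show "geodesic {z\<in>H2. cmod (z - of_real c) = r}" unfolding geodesic_def using rpos by blast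
    show "q1 \<in> {z\<in>H2. cmod (z - of_real c) = r}" using q1 by (simp add: r_def)
    show "q2 \<in> {z\<in>H2. cmod (z - of_real c) = r}" using q2 c2 by simp
  qed
qed

lemma circle_points_eq_if_same_Re:
  assumes "Im q1 > 0" "Im q2 > 0" "Re q1 = Re q2"
    and "(Re q1 - c)\<^sup>2 + (Im q1)\<^sup>2 = r\<^sup>2" "(Re q2 - c)\<^sup>2 + (Im q2)\<^sup>2 = r\<^sup>2"
  shows "q1 = q2"
proof -
  have "(Im q1)\<^sup>2 = (Im q2)\<^sup>2" using assms(3-5) by simp
  then have "Im q1 = Im q2" using assms(1,2) by (simp add: power2_eq_iff_nonneg less_imp_le)
  then show ?thesis using assms(3) by (simp add: complex_eq_iff)
qed

lemma geodesic_unique: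
  assumes L1: "geodesic L1" and L2: "geodesic L2" and ne: "q1 \<noteq> q2"
    and m: "q1 \<in> L1" "q2 \<in> L1" "q1 \<in> L2" "q2 \<in> L2"
  shows "L1 = L2"
proof -
  have H: "q1 \<in> H2" "q2 \<in> H2" using m(1,2) L1 unfolding geodesic_def by auto
  then have i: "Im q1 > 0" "Im q2 > 0" by (auto simp: H2_def)
  note same_re = circle_points_eq_if_same_Re[OF i] ne
  consider (VV) c1 c2 where "L1 = {z\<in>H2. Re z = c1}" "L2 = {z\<in>H2. Re z = c2}"
    | (VC) c1 c2 r2 where "L1 = {z\<in>H2. Re z = c1}" "r2 > 0" "L2 = {z\<in>H2. cmod (z - of_real c2) = r2}"
    | (CV) c1 r1 c2 where "r1 > 0" "L1 = {z\<in>H2. cmod (z - of_real c1) = r1}" "L2 = {z\<in>H2. Re z = c2}"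
    | (CC) c1 r1 c2 r2 where "r1 > 0" "L1 = {z\<in>H2. cmod (z - of_real c1) = r1}"
        "r2 > 0" "L2 = {z\<in>H2. cmod (z - of_real c2) = r2}"
    using L1 L2 unfolding geodesic_def by blast
  then show ?thesis
  proof cases
    case VV then show ?thesis using m by auto
  next
    case VC
    then have "Re q1 = Re q2" "(Re q1 - c2)^2 + (Im q1)^2 = r2^2" "(Re q2 - c2)^2 + (Im q2)^2 = r2^2"
      using m cmod_eq_iff_circle[of r2] by auto
    then show ?thesis using same_re by blast
  next
    case CV
    then have "Re q1 = Re q2" "(Re q1 - c1)^2 + (Im q1)^2 = r1^2" "(Re q2 - c1)^2 + (Im q2)^2 = r1^2"
      using m cmod_eq_iff_circle[of r1] by auto
    then show ?thesis using same_re by blast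
  next
    case CC
    then have e: "(Re q1 - c1)^2 + (Im q1)^2 = r1^2" "(Re q2 - c1)^2 + (Im q2)^2 = r1^2"
      "(Re q1 - c2)^2 + (Im q1)^2 = r2^2" "(Re q2 - c2)^2 + (Im q2)^2 = r2^2"
      using m cmod_eq_iff_circle[of r1] cmod_eq_iff_circle[of r2] by auto
    have "c1 = c2"
    proof (rule ccontr)
      assume "c1 \<noteq> c2"
      have "2*(c2 - c1)*Re q1 = r1^2 - r2^2 + c2^2 - c1^2" using e(1,3) by (simp add: power2_eq_square algebra_simps)
      moreover have "2*(c2 - c1)*Re q2 = r1^2 - r2^2 + c2^2 - c1^2" using e(2,4) by (simp add: power2_eq_square algebra_simps)
      ultimately have "(2*(c2 - c1)) * Re q1 = (2*(c2 - c1)) * Re q2" by simp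
      then have "Re q1 = Re q2" using \<open>c1 \<noteq> c2\<close> by simp
      then show False using same_re e(1,2) by blast
    qed
    moreover have "r1 = r2"
    proof -
      have "r1^2 = r2^2" using e(1,3) \<open>c1 = c2\<close> by simp
      then show ?thesis using CC by (simp add: power2_eq_iff_nonneg less_imp_le)
    qed
    ultimately show ?thesis using CC by simp
  qed
qed

lemma geodesic_through_props:
  assumes "q1 \<in> H2" "q2 \<in> H2" "q1 \<noteq> q2"
  shows "geodesic (geodesic_through q1 q2) \<and> q1 \<in> geodesic_through q1 q2 \<and> q2 \<in> geodesic_through q1 q2"
  unfolding geodesic_through_def
proof (rule theI')
  show "\<exists>!L. geodesic L \<and> q1 \<in> L \<and> q2 \<in> L"
    using geodesic_exists[OF assms(1,2)] geodesic_unique assms(3) by blast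
qed

lemma geodesic_through_commute: "geodesic_through q1 q2 = geodesic_through q2 q1"
  unfolding geodesic_through_def by (simp add: conj_commute conj_left_commute)

lemma traceless_normal_form:
  assumes d: "det A = 1" and t: "trace A = 0"
  obtains p q r where "r > 0" "p^2 + q*r = -1" "A = mat2 p q r (-p) \<or> A = - mat2 p q r (-p)"
proof -
  obtain a b c e where A: "A = mat2 a b c e" by (rule mat2_cases)
  have e: "e = -a" using t by (simp add: A trace_mat2)
  have bc: "a^2 + b*c = -1" using d e by (simp add: A det_mat2 power2_eq_square)
  have "c \<noteq> 0"
  proof
    assume "c = 0" then have "a^2 = -1" using bc by simp
    moreover have "a^2 \<ge> 0" by simp
    ultimately show False by simp
  qed
  then consider "c > 0" | "c < 0" by linarith
  then show ?thesis
  proof cases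
    case 1 then show ?thesis using that[of c a b] bc by (simp add: A e)
  next
    case 2
    have "A = - mat2 (-a) (-b) (-c) (-(-a))" by (simp add: A e uminus_mat2)
    then show ?thesis using that[of "-c" "-a" "-b"] bc 2 by simp
  qed
qed

lemma half_turn_traceless:
  fixes p q r :: real
  assumes r: "r > 0" and pqr: "p^2 + q*r = -1"
  shows "half_turn (psl (mat2 p q r (-p))) (Complex (p/r) (1/r))"
proof -
  define M where "M = mat2 p q r (-p)"
  have dM: "det M = 1" using pqr by (simp add: M_def det_mat2 power2_eq_square algebra_simps)
  have car: "psl M \<in> carrier PSL2R" by (rule psl_in_carrier[OF dM])
  have ptr0: "ptr (psl M) = 0" by (simp add: ptr_psl M_def trace_mat2)
  have ns: "nonscalar M" using r by (simp add: nonscalar_def M_def)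
  have ne1: "psl M \<noteq> \<one>\<^bsub>PSL2R\<^esub>" using ns nonscalar_iff_psl_ne_one[OF dM] by simp
  have MM: "M ** M = - mat 1" using SL2_cayley_hamilton[OF dM] by (simp add: M_def trace_mat2)
  have sq: "psl M \<otimes>\<^bsub>PSL2R\<^esub> psl M = \<one>\<^bsub>PSL2R\<^esub>"
    by (simp add: psl_mult[OF dM dM] MM PSL2R_one psl_eq_iff)
  have H: "Complex (p/r) (1/r) \<in> H2" using r by (simp add: H2_def)
  have "mob M (Complex (p/r) (1/r)) = Complex (p/r) (1/r)"
  proof -
    have y: "1/r > 0" using r by simp
    have N: "(r*(p/r) - p)^2 + (r*(1/r))^2 = 1" using r by simp
    have U: "(p*(p/r) + q)*(r*(p/r) - p) + (p*(1/r))*(r*(1/r)) = p/r" using r by simp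
    show ?thesis using mob_traceless(2)[OF pqr r y, of "p/r"] unfolding N U M_def by simp
  qed
  then show ?thesis unfolding half_turn_def elliptic_def using car ptr0 ne1 sq H
    by (simp add: pmob_psl M_def)
qed

lemma mob_traceless_image_gen_circle:
  fixes p q r :: real
  assumes r: "r > 0" and pqr: "p^2 + q*r = -1" and fp: "Complex (p/r) (1/r) \<in> gen_circle \<alpha> \<beta> \<gamma>"
  shows "mob (mat2 p q r (-p)) ` gen_circle \<alpha> \<beta> \<gamma> = gen_circle \<alpha> \<beta> \<gamma>"
proof
  show "mob (mat2 p q r (-p)) ` gen_circle \<alpha> \<beta> \<gamma> \<subseteq> gen_circle \<alpha> \<beta> \<gamma>"
    using mob_traceless_gen_circle[OF pqr r fp] by auto
next
  show "gen_circle \<alpha> \<beta> \<gamma> \<subseteq> mob (mat2 p q r (-p)) ` gen_circle \<alpha> \<beta> \<gamma>"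
  proof
    fix z assume z: "z \<in> gen_circle \<alpha> \<beta> \<gamma>"
    then have "Im z > 0" by (simp add: gen_circle_def)
    moreover have "det (mat2 p q r (-p)) = 1" using pqr by (simp add: det_mat2 power2_eq_square algebra_simps)
    ultimately have "z = mob (mat2 p q r (-p)) (mob (mat2 p q r (-p)) z)"
      using mob_involution_if_trace_zero by (simp add: trace_mat2)
    moreover have "mob (mat2 p q r (-p)) z \<in> gen_circle \<alpha> \<beta> \<gamma>" using mob_traceless_gen_circle[OF pqr r fp z] .
    ultimately show "z \<in> mob (mat2 p q r (-p)) ` gen_circle \<alpha> \<beta> \<gamma>" by blast
  qed
qed

lemma abs_trace_mult_gt_2_if_traceless:
  fixes A B :: "real^2^2"
  assumes dA: "det A = 1" and dB: "det B = 1" and tA: "trace A = 0" and tB: "trace B = 0"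
    and nc: "A ** B \<noteq> B ** A"
  shows "\<bar>trace (A ** B)\<bar> > 2"
proof -
  have "adj2 A = - A" "adj2 B = - B" using tA tB by (simp_all add: adj2_eq_trace_minus)
  then have "A ** B ** adj2 A ** adj2 B = (A ** B) ** (A ** B)"
    by (simp add: matrix_mul_uminus_left matrix_mul_uminus_right matrix_mul_assoc)
  then have "(trace (A ** B))\<^sup>2 - 2 > 2"
    using trace_commutator_gt_2[OF dA dB _ nc] tA trace_mult_self[of "A ** B"] dA dB
    by (simp add: det_mul)
  then show ?thesis by (simp add: abs_greater_2_iff_square)
qed

lemma two_halfturns_one_translation_normal_form:
  fixes p1 q1 r1 p2 q2 r2 :: real
  defines "A \<equiv> mat2 p1 q1 r1 (-p1)" and "B \<equiv> mat2 p2 q2 r2 (-p2)"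
  assumes r1: "r1 > 0" and e1: "p1\<^sup>2 + q1*r1 = -1" and r2: "r2 > 0" and e2: "p2\<^sup>2 + q2*r2 = -1"
    and nc: "A ** B \<noteq> B ** A"
  shows "two_halfturns_one_translation (psl A) (psl B) (psl (A ** B))"
proof -
  define z1 where "z1 = Complex (p1/r1) (1/r1)"
  define z2 where "z2 = Complex (p2/r2) (1/r2)"
  have dA: "det A = 1" and dB: "det B = 1"
    using e1 e2 by (simp_all add: A_def B_def det_mat2 power2_eq_square algebra_simps)
  have ne: "z1 \<noteq> z2"
  proof
    assume "z1 = z2"
    then have "Im z1 = Im z2" "Re z1 = Re z2" by simp_all
    then have "r1 = r2" "p1 = p2" using r1 by (simp_all add: z1_def z2_def)
    moreover from this have "q1 = q2" using e1 e2 r1 by (metis add_left_cancel mult_right_cancel less_irrefl)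
    ultimately show False using nc by (simp add: A_def B_def)
  qed
  have H: "z1 \<in> H2" "z2 \<in> H2" using r1 r2 by (simp_all add: z1_def z2_def H2_def)
  define L where "L = geodesic_through z1 z2"
  have L: "geodesic L" "z1 \<in> L" "z2 \<in> L" using geodesic_through_props[OF H ne] by (simp_all add: L_def)
  obtain \<alpha> \<beta> \<gamma> where Lf: "L = gen_circle \<alpha> \<beta> \<gamma>" using geodesic_gen_circle[OF L(1)] by blast
  have "mob A ` L = L" "mob B ` L = L"
    unfolding A_def B_def Lf using mob_traceless_image_gen_circle r1 e1 r2 e2 L(2,3) Lf
    by (simp_all add: z1_def z2_def)
  moreover have "pmob (psl (A ** B)) z = mob A (mob B z)" if "z \<in> L" for z
    using that Lf mob_mult[OF dA dB] by (simp add: pmob_psl gen_circle_def)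
  ultimately have "pmob (psl (A ** B)) ` L = L" by (metis (no_types, lifting) image_cong image_image)
  moreover have "\<bar>trace (A ** B)\<bar> > 2"
    by (rule abs_trace_mult_gt_2_if_traceless[OF dA dB _ _ nc]) (simp_all add: A_def B_def trace_mat2)
  ultimately have "hyp_translation_along (psl (A ** B)) L"
    using nonscalar_if_abs_trace_ne_2 nonscalar_iff_psl_ne_one dA dB
    by (auto simp: hyp_translation_along_def hyperbolic_def psl_in_carrier det_mul ptr_psl)
  moreover have "half_turn (psl A) z1" "half_turn (psl B) z2"
    using half_turn_traceless[OF r1 e1] half_turn_traceless[OF r2 e2]
    by (simp_all add: A_def B_def z1_def z2_def)
  ultimately show ?thesis unfolding two_halfturns_one_translation_def L_def using ne by blast
qed

lemma two_halfturns_one_translation_traceless: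
  assumes dA: "det A = 1" and dB: "det B = 1" and tA: "trace A = 0" and tB: "trace B = 0"
    and nc: "A ** B \<noteq> B ** A"
  shows "two_halfturns_one_translation (psl A) (psl B) (psl (A ** B))"
proof -
  obtain p1 q1 r1 where n1: "r1 > 0" "p1\<^sup>2 + q1*r1 = -1" "psl A = psl (mat2 p1 q1 r1 (-p1))"
    using traceless_normal_form[OF dA tA] psl_eq_iff by metis
  obtain p2 q2 r2 where n2: "r2 > 0" "p2\<^sup>2 + q2*r2 = -1" "psl B = psl (mat2 p2 q2 r2 (-p2))"
    using traceless_normal_form[OF dB tB] psl_eq_iff by metis
  have "psl (A ** B) = psl (mat2 p1 q1 r1 (-p1) ** mat2 p2 q2 r2 (-p2))"
    using n1(3) n2(3) by (auto simp: psl_eq_iff matrix_mul_uminus_left matrix_mul_uminus_right)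
  moreover have "mat2 p1 q1 r1 (-p1) ** mat2 p2 q2 r2 (-p2) \<noteq> mat2 p2 q2 r2 (-p2) ** mat2 p1 q1 r1 (-p1)"
    using nc n1(3) n2(3) by (auto simp: psl_eq_iff matrix_mul_uminus_left matrix_mul_uminus_right)
  ultimately show ?thesis
    using two_halfturns_one_translation_normal_form[OF n1(1,2) n2(1,2)] n1(3) n2(3) by simp
qed

lemma two_halfturns_one_translation_swap:
  "two_halfturns_one_translation x y z \<Longrightarrow> two_halfturns_one_translation y x z"
  unfolding two_halfturns_one_translation_def using geodesic_through_commute by metis

lemma half_turn_involution: "half_turn x q \<Longrightarrow> x \<in> carrier PSL2R \<and> x \<otimes>\<^bsub>PSL2R\<^esub> x = \<one>\<^bsub>PSL2R\<^esub>"
  by (simp add: half_turn_def elliptic_def)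

lemma hyperbolic_not_involution: "hyperbolic z \<Longrightarrow> z \<otimes>\<^bsub>PSL2R\<^esub> z \<noteq> \<one>\<^bsub>PSL2R\<^esub>"
proof
  assume hyp: "hyperbolic z" and zz: "z \<otimes>\<^bsub>PSL2R\<^esub> z = \<one>\<^bsub>PSL2R\<^esub>"
  obtain A where A: "det A = 1" "z = psl A" using hyp PSL2R_obtain by (auto simp: hyperbolic_def)
  have "z [^]\<^bsub>PSL2R\<^esub> (2::nat) = \<one>\<^bsub>PSL2R\<^esub>"
    using zz hyp by (simp add: numeral_2_eq_2 hyperbolic_def)
  then have "torsion PSL2R z" unfolding torsion_def by (intro exI[of _ "2::nat"]) simp
  moreover have "\<bar>trace A\<bar> > 2" using hyp A by (simp add: hyperbolic_def ptr_psl)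
  ultimately show False using not_torsion_if_abs_trace_gt_2[OF A(1)] A(2) by simp
qed

lemma two_halfturns_one_translation_if_noncommuting_torsion:
  assumes VA: "virtually_abelian PSL2R S" and S: "subgroup S PSL2R"
    and a: "a \<in> S" and b: "b \<in> S" and ta: "torsion PSL2R a" and tb: "torsion PSL2R b"
    and nc: "a \<otimes>\<^bsub>PSL2R\<^esub> b \<noteq> b \<otimes>\<^bsub>PSL2R\<^esub> a"
  shows "two_halfturns_one_translation a b (a \<otimes>\<^bsub>PSL2R\<^esub> b)"
proof -
  obtain A B where A: "det A = 1" "a = psl A" and B: "det B = 1" "b = psl B"
    using S a b subgroup.mem_carrier PSL2R_obtain by metis
  have ncAB: "A ** B \<noteq> B ** A" using nc psl_commute_iff[OF A(1) B(1)] A B by simp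
  then have "trace A = 0" "trace B = 0"
    using trace_zero_if_noncommuting_torsion[OF VA S A(1) _ _ B(1)] a b ta tb A B by auto
  then show ?thesis
    using two_halfturns_one_translation_traceless[OF A(1) B(1) _ _ ncAB] A B by (simp add: psl_mult)
qed

lemma virtually_abelian_nonabelian_if_two_halfturns_one_translation:
  assumes T: "two_halfturns_one_translation x y (x \<otimes>\<^bsub>PSL2R\<^esub> y)"
  shows "virtually_abelian PSL2R (generate PSL2R {x, y}) \<and> \<not> abelian_set PSL2R (generate PSL2R {x, y})"
proof
  obtain q1 q2 where "half_turn x q1" "half_turn y q2"
    and hyp: "hyperbolic (x \<otimes>\<^bsub>PSL2R\<^esub> y)"
    using T by (auto simp: two_halfturns_one_translation_def hyp_translation_along_def)
  then have x: "x \<in> carrier PSL2R" "x \<otimes>\<^bsub>PSL2R\<^esub> x = \<one>\<^bsub>PSL2R\<^esub>"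
    and y: "y \<in> carrier PSL2R" "y \<otimes>\<^bsub>PSL2R\<^esub> y = \<one>\<^bsub>PSL2R\<^esub>"
    using half_turn_involution by auto
  show "virtually_abelian PSL2R (generate PSL2R {x, y})"
    using P.virtually_abelian_generate_involutions x y by blast
  show "\<not> abelian_set PSL2R (generate PSL2R {x, y})"
  proof
    assume "abelian_set PSL2R (generate PSL2R {x, y})"
    then have "y \<otimes>\<^bsub>PSL2R\<^esub> x = x \<otimes>\<^bsub>PSL2R\<^esub> y"
      unfolding abelian_set_def by (blast intro: generate.incl)
    then have "(x \<otimes>\<^bsub>PSL2R\<^esub> y) \<otimes>\<^bsub>PSL2R\<^esub> (x \<otimes>\<^bsub>PSL2R\<^esub> y)
        = (x \<otimes>\<^bsub>PSL2R\<^esub> x) \<otimes>\<^bsub>PSL2R\<^esub> (y \<otimes>\<^bsub>PSL2R\<^esub> y)"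
      using x y by (metis P.m_assoc P.m_closed)
    then show False using hyperbolic_not_involution[OF hyp] x y by simp
  qed
qed

text \<open>As non-torsion elements of a virtually abelian subgroup commute, two of g, h, g h are torsion
  and do not commute.\<close>
lemma two_halfturns_one_translation_if_virtually_abelian_nonabelian:
  assumes g: "g \<in> carrier PSL2R" and h: "h \<in> carrier PSL2R"
    and VA: "virtually_abelian PSL2R (generate PSL2R {g, h})"
    and NA: "\<not> abelian_set PSL2R (generate PSL2R {g, h})"
  shows "two_halfturns_one_translation g h (g \<otimes>\<^bsub>PSL2R\<^esub> h)
       \<or> two_halfturns_one_translation g (g \<otimes>\<^bsub>PSL2R\<^esub> h) h
       \<or> two_halfturns_one_translation h (g \<otimes>\<^bsub>PSL2R\<^esub> h) g"
proof -
  let ?S = "generate PSL2R {g, h}" and ?gh = "g \<otimes>\<^bsub>PSL2R\<^esub> h"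
  have S: "subgroup ?S PSL2R" using g h by (simp add: P.generate_is_subgroup)
  have gS: "g \<in> ?S" and hS: "h \<in> ?S" by (auto intro: generate.incl)
  then have ghS: "?gh \<in> ?S" by (rule generate.eng)
  have nc: "?gh \<noteq> h \<otimes>\<^bsub>PSL2R\<^esub> g" using NA P.abelian_set_generate[of "{g, h}"] g h by auto
  note commute = virtually_abelian_nontorsion_commute[OF VA S]
  note config = two_halfturns_one_translation_if_noncommuting_torsion[OF VA S]
  consider "torsion PSL2R g" "torsion PSL2R h" | "torsion PSL2R g" "\<not> torsion PSL2R h"
    | "\<not> torsion PSL2R g" "torsion PSL2R h" | "\<not> torsion PSL2R g" "\<not> torsion PSL2R h" by blast
  then show ?thesis
  proof cases
    case 1
    then show ?thesis using config[OF gS hS _ _ nc] by simp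
  next
    case 2
    then have "torsion PSL2R ?gh" using commute[OF hS ghS] P.commute_mult_left_iff[OF g h] nc by auto
    then have "two_halfturns_one_translation g ?gh (g \<otimes>\<^bsub>PSL2R\<^esub> ?gh)"
      using config[OF gS ghS] 2 P.commute_mult_right_iff[OF g h] nc by auto
    moreover from this have "g \<otimes>\<^bsub>PSL2R\<^esub> ?gh = h"
      using half_turn_involution g h
      by (auto simp: two_halfturns_one_translation_def P.m_assoc[symmetric])
    ultimately show ?thesis by simp
  next
    case 3
    then have "torsion PSL2R ?gh" using commute[OF gS ghS] P.commute_mult_right_iff[OF g h] nc by auto
    then have "two_halfturns_one_translation h ?gh (?gh \<otimes>\<^bsub>PSL2R\<^esub> h)"
      using config[OF ghS hS] 3 P.commute_mult_left_iff[OF g h] nc two_halfturns_one_translation_swap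
      by auto
    moreover from this have "?gh \<otimes>\<^bsub>PSL2R\<^esub> h = g"
      using half_turn_involution g h by (auto simp: two_halfturns_one_translation_def P.m_assoc)
    ultimately show ?thesis by simp
  next
    case 4
    then show ?thesis using commute[OF gS hS] nc by simp
  qed
qed

theorem lemma4p8:
  fixes g h :: "(real^2^2) set"
  assumes "g \<in> carrier PSL2R" and "h \<in> carrier PSL2R"
  shows "(virtually_abelian PSL2R (generate PSL2R {g, h})
            \<and> \<not> abelian_set PSL2R (generate PSL2R {g, h}))
         \<longleftrightarrow> (two_halfturns_one_translation g h (g \<otimes>\<^bsub>PSL2R\<^esub> h)
              \<or> two_halfturns_one_translation g (g \<otimes>\<^bsub>PSL2R\<^esub> h) h
              \<or> two_halfturns_one_translation h (g \<otimes>\<^bsub>PSL2R\<^esub> h) g)"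
    (is "?VA \<longleftrightarrow> ?T1 \<or> ?T2 \<or> ?T3")
proof
  show "?VA \<Longrightarrow> ?T1 \<or> ?T2 \<or> ?T3"
    using two_halfturns_one_translation_if_virtually_abelian_nonabelian assms by blast
next
  note g = assms(1) and h = assms(2)
  note sufficient = virtually_abelian_nonabelian_if_two_halfturns_one_translation
  assume "?T1 \<or> ?T2 \<or> ?T3"
  then show ?VA
  proof (elim disjE)
    assume ?T1
    then show ?VA by (rule sufficient)
  next
    assume T: ?T2
    then have "g \<otimes>\<^bsub>PSL2R\<^esub> (g \<otimes>\<^bsub>PSL2R\<^esub> h) = h"
      using half_turn_involution g h by (auto simp: two_halfturns_one_translation_def P.m_assoc[symmetric])
    then show ?VA using sufficient[of g "g \<otimes>\<^bsub>PSL2R\<^esub> h"] T P.generate_pair_mult_right[OF g h] by simp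
  next
    assume ?T3
    then have T: "two_halfturns_one_translation (g \<otimes>\<^bsub>PSL2R\<^esub> h) h g"
      by (rule two_halfturns_one_translation_swap)
    then have "(g \<otimes>\<^bsub>PSL2R\<^esub> h) \<otimes>\<^bsub>PSL2R\<^esub> h = g"
      using half_turn_involution g h by (auto simp: two_halfturns_one_translation_def P.m_assoc)
    then show ?VA using sufficient[of "g \<otimes>\<^bsub>PSL2R\<^esub> h" h] T P.generate_pair_mult_left[OF g h] by simp
  qed
qed

end
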